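(* Let $n\ge2$, $d\ge1$, $\tau>0$, $\sigma>0$, with $\mu^\star_1,\mu^\star_2\stackrel{\mathrm{i.i.d.}}{\sim}\mathcal N(0,\tau^2I_d)$, $\xi_1,\dots,\xi_n\stackrel{\mathrm{i.i.d.}}{\sim}\mathcal N(0,\sigma^2I_d)$ independent, fixed labels $z^\star_i\in\{1,2\}$ with both classes $S^\star_\ell=\{i:z^\star_i=\ell\}$ nonempty, $x_i=\mu^\star_{z^\star_i}+\xi_i$, and a fixed partition $\{C_1,C_2\}$ of $[n]$ into nonempty sets. Let $i\in S^\star_\ell$ and let $C_j$ be the cluster with $i\in C_j$, where $|C_j|\ge2$. Then $$\Delta_H^2(x_i,C_j)=\frac{|C_j|}{|C_j|-1}\|x_i-\widehat\mu_j\|^2\sim\eta\,\chi^2_d,\qquad \eta=2\tau^2\frac{|C_j|}{|C_j|-1}(1-R^\ell_j)^2+\sigma^2.$$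
   Context: $R^\ell_k=|C_k\cap S^\star_\ell|/|C_k|$; $\widehat\mu_k=|C_k|^{-1}\sum_{m\in C_k}x_m$. $\Delta_H^2$ is the Hartigan weighted distance, which for $i\in C_k$ equals $\frac{|C_k|}{|C_k|-1}\|x_i-\widehat\mu_k\|^2$. "$Y\sim a\chi^2_d$" means $Y/a$ is chi-squared with $d$ degrees of freedom. Randomness is over the centers and noise. *)

theory Defs
  imports "HOL-Probability.Probability"
begin

definition chi2_density :: "nat \<Rightarrow> real \<Rightarrow> real" where
  "chi2_density d y = (if y \<le> 0 then 0
     else y powr (real d / 2 - 1) * exp (- y / 2) / (2 powr (real d / 2) * Gamma (real d / 2)))"

text \<open>Empirical cluster mean, coordinatewise: points are given by coordinates x m k (k < d).\<close>
definition cluster_mean :: "(nat \<Rightarrow> nat \<Rightarrow> real) \<Rightarrow> nat set \<Rightarrow> nat \<Rightarrow> real" where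
  "cluster_mean x C k = (\<Sum>m\<in>C. x m k) / real (card C)"

definition hartigan_dist2 :: "nat \<Rightarrow> (nat \<Rightarrow> nat \<Rightarrow> real) \<Rightarrow> nat \<Rightarrow> nat set \<Rightarrow> real" where
  "hartigan_dist2 d x i C =
     real (card C) / (real (card C) - 1) * (\<Sum>k<d. (x i k - cluster_mean x C k)\<^sup>2)"

end

theory Submission
  imports Defs
begin

(* Coordinatewise, x_i - mu_j is a fixed linear combination of the independent Gaussians
   mu*_1, mu*_2, xi_1, ..., xi_n: the centers enter as (1 - R) (mu*_l - mu*_l') because the
   cluster mean averages the two centers with weights R and 1 - R, and the noise enters through
   the centering weights [m = i] - 1/|C_j|, whose squares sum to (|C_j| - 1)/|C_j|. So every
   coordinate is centered normal with variance eta (|C_j| - 1)/|C_j|, and distinct coordinates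
   involve disjoint sets of the underlying Gaussians, hence are independent. The Hartigan
   distance divided by eta is therefore a sum of d independent squared standard normals, which
   is chi^2_d because Z^2 ~ chi^2_1 and chi^2_a * chi^2_b = chi^2_(a+b); the latter convolution
   identity reduces to the Beta integral. *)

section \<open>Chi-squared densities\<close>

lemma chi2_density_nonneg: "0 \<le> chi2_density d y"
  unfolding chi2_density_def by (cases "d = 0") (auto intro!: divide_nonneg_pos)

lemma borel_measurable_chi2_density[measurable]: "chi2_density d \<in> borel_measurable borel"
  unfolding chi2_density_def by measurable

lemma nn_integral_Beta_kernel:
  fixes x p q :: real
  assumes x: "x > 0" and pq: "p > 0" "q > 0"
  shows "(\<integral>\<^sup>+y. ennreal ((x - y) powr (p - 1) * y powr (q - 1) * indicator {0<..<x} y) \<partial>lborel)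
    = ennreal (x powr (p + q - 1) * Beta p q)"
proof -
  have unit: "(\<integral>\<^sup>+s. ennreal ((1 - s) powr (p - 1) * s powr (q - 1) * indicator {0<..<1} s) \<partial>lborel)
      = ennreal (Beta p q)"
  proof -
    have "(\<integral>\<^sup>+s. ennreal (s powr (q - 1) * (1 - s) powr (p - 1)) * indicator {0..1} s \<partial>lborel)
        = ennreal (Beta q p)"
      by (rule nn_integral_has_integral_lebesgue'[OF _ has_integral_Beta_real]) (use pq in auto)
    moreover have "(\<integral>\<^sup>+s. ennreal (s powr (q - 1) * (1 - s) powr (p - 1)) * indicator {0..1} s \<partial>lborel)
        = (\<integral>\<^sup>+s. ennreal ((1 - s) powr (p - 1) * s powr (q - 1) * indicator {0<..<1} s) \<partial>lborel)"
      by (intro nn_integral_cong) (auto simp: indicator_def)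
    ultimately show ?thesis by (simp add: Beta_commute)
  qed
  have scale: "ennreal ((x - x * s) powr (p - 1) * (x * s) powr (q - 1) * indicator {0<..<x} (x * s))
      = ennreal (x powr (p + q - 2)) * ennreal ((1 - s) powr (p - 1) * s powr (q - 1) * indicator {0<..<1} s)"
    for s
  proof (cases "0 < s \<and> s < 1")
    case True
    have "x - x * s = x * (1 - s)"
      by (simp add: algebra_simps)
    then have "(x - x * s) powr (p - 1) * (x * s) powr (q - 1)
        = x powr (p - 1) * x powr (q - 1) * ((1 - s) powr (p - 1) * s powr (q - 1))"
      using True x by (simp add: powr_mult)
    also have "x powr (p - 1) * x powr (q - 1) = x powr (p + q - 2)"
      by (simp add: flip: powr_add)
    finally show ?thesis
      using True x by (simp add: indicator_def flip: ennreal_mult)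
  next
    case False
    then have "\<not> (0 < x * s \<and> x * s < x)"
      using x by (auto simp: zero_less_mult_iff)
    then show ?thesis using False by (auto simp: indicator_def)
  qed
  have "(\<integral>\<^sup>+y. ennreal ((x - y) powr (p - 1) * y powr (q - 1) * indicator {0<..<x} y) \<partial>lborel)
      = ennreal x * (\<integral>\<^sup>+s. ennreal ((x - x * s) powr (p - 1) * (x * s) powr (q - 1)
          * indicator {0<..<x} (x * s)) \<partial>lborel)"
    using nn_integral_real_affine[of "\<lambda>y. ennreal ((x - y) powr (p - 1) * y powr (q - 1)
      * indicator {0<..<x} y)" x 0] x by simp
  also have "\<dots> = ennreal x * (ennreal (x powr (p + q - 2)) * ennreal (Beta p q))"
    unfolding scale by (subst nn_integral_cmult) (simp_all add: unit)
  also have "\<dots> = ennreal (x powr (p + q - 1) * Beta p q)"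
  proof -
    have "x * x powr (p + q - 2) = x powr (p + q - 1)"
      using x by (simp add: powr_add[of x 1 "p + q - 2", simplified])
    then show ?thesis
      using x pq by (simp add: Beta_def flip: ennreal_mult mult.assoc)
  qed
  finally show ?thesis .
qed

lemma chi2_density_convolution:
  fixes a b :: nat
  assumes "a > 0" "b > 0"
  shows "(\<integral>\<^sup>+y. ennreal (chi2_density a (x - y)) * ennreal (chi2_density b y) \<partial>lborel)
    = ennreal (chi2_density (a + b) x)"
proof (cases "x > 0")
  case False
  then have "ennreal (chi2_density a (x - y)) * ennreal (chi2_density b y) = 0" for y
    by (auto simp: chi2_density_def)
  then show ?thesis
    using False by (simp del: mult_eq_0_iff) (simp add: chi2_density_def)
next
  case x: True
  define p where "p = real a / 2"
  define q where "q = real b / 2"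
  have pq: "p > 0" "q > 0"
    using assms by (auto simp: p_def q_def)
  define K where "K = exp (- x / 2) / (2 powr p * Gamma p * (2 powr q * Gamma q))"
  have K: "K \<ge> 0"
    unfolding K_def using pq by (auto intro!: divide_nonneg_pos)
  have integrand: "ennreal (chi2_density a (x - y)) * ennreal (chi2_density b y)
      = ennreal K * ennreal ((x - y) powr (p - 1) * y powr (q - 1) * indicator {0<..<x} y)" for y
  proof (cases "0 < y \<and> y < x")
    case True
    have "chi2_density a (x - y) * chi2_density b y
        = K * ((x - y) powr (p - 1) * y powr (q - 1) * indicator {0<..<x} y)"
      using True unfolding chi2_density_def K_def p_def[symmetric] q_def[symmetric]
      by (simp add: indicator_def diff_divide_distrib flip: exp_add)
    then show ?thesis
      by (simp add: chi2_density_nonneg K flip: ennreal_mult)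
  next
    case False
    then show ?thesis by (auto simp: chi2_density_def indicator_def)
  qed
  have "(\<integral>\<^sup>+y. ennreal (chi2_density a (x - y)) * ennreal (chi2_density b y) \<partial>lborel)
      = ennreal K * ennreal (x powr (p + q - 1) * Beta p q)"
    unfolding integrand by (subst nn_integral_cmult) (simp_all add: nn_integral_Beta_kernel x pq)
  also have "\<dots> = ennreal (K * (x powr (p + q - 1) * Beta p q))"
    using K by (simp add: ennreal_mult')
  also have "K * (x powr (p + q - 1) * Beta p q) = chi2_density (a + b) x"
  proof -
    have "real (a + b) / 2 = p + q"
      by (simp add: p_def q_def add_divide_distrib)
    then have "chi2_density (a + b) x
        = x powr (p + q - 1) * exp (- x / 2) / (2 powr (p + q) * Gamma (p + q))"
      using x unfolding chi2_density_def by (simp only:) simp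
    moreover have "2 powr (p + q) = 2 powr p * 2 powr q"
      by (simp add: powr_add)
    moreover have "Gamma p > 0" "Gamma q > 0" "Gamma (p + q) > 0"
      using pq by auto
    ultimately show ?thesis
      unfolding K_def Beta_def by (simp add: field_simps)
  qed
  finally show ?thesis .
qed

lemma chi2_density_1_square:
  assumes x: "x > 0"
  shows "chi2_density 1 (x\<^sup>2) * (2 * x) = 2 * std_normal_density x"
proof -
  have "(x\<^sup>2) powr (real 1 / 2 - 1) = (x\<^sup>2) powr (- (1 / 2))"
    by simp
  also have "\<dots> = inverse ((x\<^sup>2) powr (1 / 2))"
    by (rule powr_minus)
  also have "(x\<^sup>2) powr (1 / 2) = x"
    using x by (simp add: powr_half_sqrt)
  finally have "chi2_density 1 (x\<^sup>2) = inverse x * exp (- x\<^sup>2 / 2) / (sqrt 2 * sqrt pi)"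
    using x by (simp add: chi2_density_def powr_half_sqrt Gamma_one_half_real)
  then show ?thesis
    using x by (simp add: std_normal_density_def real_sqrt_mult field_simps)
qed

lemma nn_integral_std_normal_symmetric:
  fixes r :: real
  shows "(\<integral>\<^sup>+x. ennreal (std_normal_density x * indicator {-r..r} x) \<partial>lborel)
    = (\<integral>\<^sup>+x. ennreal (2 * std_normal_density x * indicator {0<..r} x) \<partial>lborel)"
proof -
  let ?half = "\<lambda>A. \<integral>\<^sup>+x. ennreal (std_normal_density x * indicator A x) \<partial>lborel"
  have "?half {-r..r} = ?half {-r..0} + ?half {0<..r}"
    by (subst nn_integral_add[symmetric])
       (auto intro!: nn_integral_cong simp: indicator_def simp flip: ennreal_plus)
  also have "?half {-r..0}
      = (\<integral>\<^sup>+x. ennreal (std_normal_density (0 + (-1) * x) * indicator {-r..0} (0 + (-1) * x)) \<partial>lborel)"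
    using nn_integral_real_affine[of "\<lambda>x. ennreal (std_normal_density x * indicator {-r..0} x)" "-1" 0]
    by simp
  also have "\<dots> = ?half {0..r}"
    by (intro nn_integral_cong) (auto simp: std_normal_density_def indicator_def)
  also have "\<dots> = ?half {0<..r}"
    by (intro nn_integral_cong_AE AE_I[of _ _ "{0}"]) (auto simp: indicator_def)
  also have "?half {0<..r} + ?half {0<..r}
      = (\<integral>\<^sup>+x. ennreal (2 * std_normal_density x * indicator {0<..r} x) \<partial>lborel)"
    by (subst nn_integral_add[symmetric]) (auto intro!: nn_integral_cong simp flip: ennreal_plus)
  finally show ?thesis .
qed

lemma nn_integral_chi2_density_1_atMost_square:
  fixes r :: real
  assumes r: "r \<ge> 0"
  shows "(\<integral>\<^sup>+t. ennreal (chi2_density 1 t) * indicator {..r\<^sup>2} t \<partial>lborel)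
    = (\<integral>\<^sup>+x. ennreal (std_normal_density x * indicator {-r..r} x) \<partial>lborel)"
proof -
  have "(\<integral>\<^sup>+t. ennreal (chi2_density 1 t) * indicator {..r\<^sup>2} t \<partial>lborel)
      = (\<integral>\<^sup>+t. ennreal (chi2_density 1 t * indicator {0\<^sup>2..r\<^sup>2} t) \<partial>lborel)"
    by (intro nn_integral_cong) (auto simp: indicator_def chi2_density_def)
  also have "\<dots> = (\<integral>\<^sup>+x. ennreal (chi2_density 1 (x\<^sup>2) * (2 * x) * indicator {0..r} x) \<partial>lborel)"
    by (rule nn_integral_substitution[where g = "\<lambda>x. x\<^sup>2" and g' = "\<lambda>x. 2 * x"])
       (use r borel_measurable_chi2_density[of 1] in
         \<open>auto intro!: derivative_eq_intros continuous_intros simp: set_borel_measurable_def\<close>)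
  also have "\<dots> = (\<integral>\<^sup>+x. ennreal (2 * std_normal_density x * indicator {0<..r} x) \<partial>lborel)"
    using chi2_density_1_square
    by (intro nn_integral_cong) (auto simp: indicator_def mult.left_commute)
  also have "\<dots> = (\<integral>\<^sup>+x. ennreal (std_normal_density x * indicator {-r..r} x) \<partial>lborel)"
    by (rule nn_integral_std_normal_symmetric[symmetric])
  finally show ?thesis .
qed

section \<open>Sums of squares of Gaussian combinations\<close>

context prob_space
begin

lemma std_normal_square_distributed:
  assumes Z: "distributed M lborel Z std_normal_density"
  shows "distributed M lborel (\<lambda>\<omega>. (Z \<omega>)\<^sup>2) (chi2_density 1)"
proof (rule distributedI_borel_atMost[where g = "\<lambda>a. measure M {\<omega>\<in>space M. (Z \<omega>)\<^sup>2 \<le> a}"])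
  have [measurable]: "Z \<in> borel_measurable M"
    using distributed_measurable[OF Z] by simp
  show "(\<lambda>\<omega>. (Z \<omega>)\<^sup>2) \<in> borel_measurable M" "chi2_density 1 \<in> borel_measurable borel"
    by measurable
  show "AE x in lborel. 0 \<le> chi2_density 1 x"
    by (simp add: chi2_density_nonneg)
  fix a :: real
  show "emeasure M {\<omega> \<in> space M. (Z \<omega>)\<^sup>2 \<le> a} = ennreal (measure M {\<omega> \<in> space M. (Z \<omega>)\<^sup>2 \<le> a})"
    by (simp add: emeasure_eq_measure)
  have "(\<integral>\<^sup>+x. ennreal (chi2_density 1 x) * indicator {..a} x \<partial>lborel)
      = emeasure M {\<omega> \<in> space M. (Z \<omega>)\<^sup>2 \<le> a}"
  proof (cases "a < 0")
    case True
    then have "{\<omega> \<in> space M. (Z \<omega>)\<^sup>2 \<le> a} = {}"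
      by (auto simp: not_le intro: less_le_trans[OF _ zero_le_power2])
    moreover have "(\<lambda>x. ennreal (chi2_density 1 x) * indicator {..a} x) = (\<lambda>_. 0)"
      using True by (auto simp: chi2_density_def indicator_def)
    ultimately show ?thesis by (simp only:) simp
  next
    case False
    define r where "r = sqrt a"
    have r: "r \<ge> 0" "r\<^sup>2 = a"
      using False by (auto simp: r_def)
    have "{\<omega> \<in> space M. (Z \<omega>)\<^sup>2 \<le> a} = Z -` {-r..r} \<inter> space M"
      using r by (auto simp flip: abs_le_square_iff)
    then have "emeasure M {\<omega> \<in> space M. (Z \<omega>)\<^sup>2 \<le> a}
        = (\<integral>\<^sup>+x. ennreal (std_normal_density x) * indicator {-r..r} x \<partial>lborel)"
      using distributed_emeasure[OF Z, of "{-r..r}"] by simp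
    also have "\<dots> = (\<integral>\<^sup>+t. ennreal (chi2_density 1 t) * indicator {..r\<^sup>2} t \<partial>lborel)"
      unfolding nn_integral_chi2_density_1_atMost_square[OF r(1)]
      by (intro nn_integral_cong) (auto simp: indicator_def)
    finally show ?thesis
      using r by simp
  qed
  then show "(\<integral>\<^sup>+x. ennreal (chi2_density 1 x * indicator {..a} x) \<partial>lborel)
      = ennreal (measure M {\<omega> \<in> space M. (Z \<omega>)\<^sup>2 \<le> a})"
    by (simp add: emeasure_eq_measure ennreal_mult'' ennreal_indicator)
qed

lemma chi2_density_add_indep:
  assumes "indep_var borel X borel Y" "a > 0" "b > 0"
    and "distributed M lborel X (chi2_density a)" "distributed M lborel Y (chi2_density b)"
  shows "distributed M lborel (\<lambda>\<omega>. X \<omega> + Y \<omega>) (chi2_density (a + b))"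
  using distributed_convolution[OF assms(1,4,5)] chi2_density_convolution[OF assms(2,3)] by simp

lemma chi2_density_sum_indep:
  assumes "finite I" "I \<noteq> {}" "indep_vars (\<lambda>_. borel) X I"
    and "\<And>i. i \<in> I \<Longrightarrow> distributed M lborel (X i) (chi2_density 1)"
  shows "distributed M lborel (\<lambda>\<omega>. \<Sum>i\<in>I. X i \<omega>) (chi2_density (card I))"
  using assms
proof (induct I rule: finite_ne_induct)
  case (singleton i)
  then show ?case by simp
next
  case (insert i I)
  have "indep_var borel (X i) borel (\<lambda>\<omega>. \<Sum>i\<in>I. X i \<omega>)"
    using insert by (intro indep_vars_sum) auto
  moreover have "distributed M lborel (\<lambda>\<omega>. \<Sum>i\<in>I. X i \<omega>) (chi2_density (card I))"
    using insert by (auto intro: indep_vars_subset)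
  ultimately show ?case
    using insert chi2_density_add_indep[of "X i" _ 1 "card I"] by (simp add: card_gt_0_iff)
qed

lemma normal_density_lincomb:
  assumes I: "finite I" and indep: "indep_vars (\<lambda>_. borel) W I"
    and normal: "\<And>t. t \<in> I \<Longrightarrow> distributed M lborel (W t) (normal_density 0 (s t))"
    and s: "\<And>t. t \<in> I \<Longrightarrow> s t > 0"
    and var: "(\<Sum>t\<in>I. (a t)\<^sup>2 * (s t)\<^sup>2) > 0"
  shows "distributed M lborel (\<lambda>\<omega>. \<Sum>t\<in>I. a t * W t \<omega>)
    (normal_density 0 (sqrt (\<Sum>t\<in>I. (a t)\<^sup>2 * (s t)\<^sup>2)))"
proof -
  \<comment> \<open>Zero coefficients are dropped: \<open>sum_indep_normal\<close> needs positive standard deviations.\<close>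
  define J where "J = {t\<in>I. a t \<noteq> 0}"
  have sum_J: "(\<Sum>t\<in>J. f t) = (\<Sum>t\<in>I. f t)" if "\<And>t. a t = 0 \<Longrightarrow> f t = 0" for f :: "_ \<Rightarrow> real"
    by (rule sum.mono_neutral_left) (use I that in \<open>auto simp: J_def\<close>)
  have J: "finite J" "J \<subseteq> I"
    using I by (auto simp: J_def)
  have "J \<noteq> {}"
    using var sum_J[of "\<lambda>t. (a t)\<^sup>2 * (s t)\<^sup>2"] by auto
  moreover have "indep_vars (\<lambda>_. borel) (\<lambda>t \<omega>. a t * W t \<omega>) J"
    by (rule indep_vars_compose2[OF indep_vars_subset[OF indep J(2)]]) auto
  moreover have "distributed M lborel (\<lambda>\<omega>. a t * W t \<omega>) (normal_density 0 (\<bar>a t\<bar> * s t))"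
    if "t \<in> J" for t
    using normal_density_affine[OF normal s, of t "a t" 0] that by (auto simp: J_def)
  ultimately have "distributed M lborel (\<lambda>\<omega>. \<Sum>t\<in>J. a t * W t \<omega>)
      (normal_density (\<Sum>t\<in>J. 0) (sqrt (\<Sum>t\<in>J. (\<bar>a t\<bar> * s t)\<^sup>2)))"
    using J s by (intro sum_indep_normal) (auto simp: J_def)
  then show ?thesis
    by (simp add: sum_J power_mult_distrib)
qed

lemma indep_vars_block_sums:
  fixes W :: "'i \<Rightarrow> 'a \<Rightarrow> real"
  assumes "indep_vars (\<lambda>_. borel) W I" "disjoint_family_on T K" "\<And>k. k \<in> K \<Longrightarrow> T k \<subseteq> I"
  shows "indep_vars (\<lambda>_. borel) (\<lambda>k \<omega>. \<Sum>t\<in>T k. a t * W t \<omega>) K"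
proof -
  have "(\<lambda>f. \<Sum>t\<in>T k. a t * f t) \<in> borel_measurable (PiM (T k) (\<lambda>_. borel))" for k
    by (intro borel_measurable_sum borel_measurable_times borel_measurable_const
        measurable_component_singleton) auto
  from indep_vars_compose2[OF indep_vars_restrict[OF assms(1,3,2)] this]
  show ?thesis
    by (simp cong: sum.cong)
qed

lemma chi2_sum_squares_normal_blocks:
  assumes K: "finite K" "K \<noteq> {}" and indep: "indep_vars (\<lambda>_. borel) W I"
    and normal: "\<And>t. t \<in> I \<Longrightarrow> distributed M lborel (W t) (normal_density 0 (s t))"
    and s: "\<And>t. t \<in> I \<Longrightarrow> s t > 0"
    and T: "disjoint_family_on T K" "\<And>k. k \<in> K \<Longrightarrow> finite (T k)" "\<And>k. k \<in> K \<Longrightarrow> T k \<subseteq> I"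
    and var: "\<And>k. k \<in> K \<Longrightarrow> (\<Sum>t\<in>T k. (a t)\<^sup>2 * (s t)\<^sup>2) = v" and v: "v > 0"
  shows "distributed M lborel (\<lambda>\<omega>. \<Sum>k\<in>K. (\<Sum>t\<in>T k. a t * W t \<omega>)\<^sup>2 / v) (chi2_density (card K))"
proof (rule chi2_density_sum_indep[OF K])
  show "indep_vars (\<lambda>_. borel) (\<lambda>k \<omega>. (\<Sum>t\<in>T k. a t * W t \<omega>)\<^sup>2 / v) K"
    using indep_vars_compose2[OF indep_vars_block_sums[OF indep T(1,3)], of "\<lambda>_ y. y\<^sup>2 / v"]
    by simp
  fix k
  assume k: "k \<in> K"
  have "distributed M lborel (\<lambda>\<omega>. \<Sum>t\<in>T k. a t * W t \<omega>) (normal_density 0 (sqrt v))"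
    using normal_density_lincomb[OF T(2)[OF k] indep_vars_subset[OF indep T(3)[OF k]], of s a]
      normal s T(3)[OF k] var[OF k] v by auto
  then have "distributed M lborel (\<lambda>\<omega>. (\<Sum>t\<in>T k. a t * W t \<omega>) / sqrt v) std_normal_density"
    using normal_standard_normal_convert[of "sqrt v"] v by simp
  from std_normal_square_distributed[OF this]
  show "distributed M lborel (\<lambda>\<omega>. (\<Sum>t\<in>T k. a t * W t \<omega>)\<^sup>2 / v) (chi2_density 1)"
    using v by (simp add: power_divide)
qed

lemma chi2_sum_squares_center_noise:
  fixes mu :: "'l \<Rightarrow> 'k \<Rightarrow> 'a \<Rightarrow> real" and xi :: "'m \<Rightarrow> 'k \<Rightarrow> 'a \<Rightarrow> real"
  assumes indep: "indep_vars (\<lambda>_. borel) (\<lambda>t. case t of Inl (l, k) \<Rightarrow> mu l k | Inr (m, k) \<Rightarrow> xi m k)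
      (Inl ` (L \<times> K) \<union> Inr ` (N \<times> K))"
    and mu: "\<And>l k. l \<in> L \<Longrightarrow> k \<in> K \<Longrightarrow> distributed M lborel (mu l k) (normal_density 0 \<tau>)"
    and xi: "\<And>m k. m \<in> N \<Longrightarrow> k \<in> K \<Longrightarrow> distributed M lborel (xi m k) (normal_density 0 \<sigma>)"
    and "\<tau> > 0" "\<sigma> > 0" and K: "finite K" "K \<noteq> {}"
    and l: "l \<in> L" "l' \<in> L" "l \<noteq> l'" and C: "C \<subseteq> N" "finite C"
    and v: "v = 2 * \<alpha>\<^sup>2 * \<tau>\<^sup>2 + \<sigma>\<^sup>2 * (\<Sum>m\<in>C. (w m)\<^sup>2)" "v > 0"
  shows "distributed M lborel
    (\<lambda>\<omega>. \<Sum>k\<in>K. (\<alpha> * (mu l k \<omega> - mu l' k \<omega>) + (\<Sum>m\<in>C. w m * xi m k \<omega>))\<^sup>2 / v)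
    (chi2_density (card K))"
proof -
  define W where "W = (\<lambda>t. case t of Inl (l, k) \<Rightarrow> mu l k | Inr (m, k) \<Rightarrow> xi m k)"
  define s where "s = (\<lambda>t :: ('l \<times> 'k) + ('m \<times> 'k). case t of Inl _ \<Rightarrow> \<tau> | Inr _ \<Rightarrow> \<sigma>)"
  define a where "a = (\<lambda>t :: ('l \<times> 'k) + ('m \<times> 'k). case t of
      Inl (l'', _) \<Rightarrow> if l'' = l then \<alpha> else - \<alpha> | Inr (m, _) \<Rightarrow> w m)"
  define T where "T = (\<lambda>k :: 'k. (\<lambda>l''. (l'', k)) ` {l, l'} <+> (\<lambda>m. (m, k)) ` C)"
  have sum_T: "(\<Sum>t\<in>T k. f t) = f (Inl (l, k)) + f (Inl (l', k)) + (\<Sum>m\<in>C. f (Inr (m, k)))"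
    for f :: "_ \<Rightarrow> real" and k
    using C(2) l(3) by (simp add: T_def sum.Plus sum.reindex inj_on_def)
  have "distributed M lborel (\<lambda>\<omega>. \<Sum>k\<in>K. (\<Sum>t\<in>T k. a t * W t \<omega>)\<^sup>2 / v) (chi2_density (card K))"
  proof (rule chi2_sum_squares_normal_blocks[OF K])
    show "indep_vars (\<lambda>_. borel) W (Inl ` (L \<times> K) \<union> Inr ` (N \<times> K))"
      using indep unfolding W_def .
    show "distributed M lborel (W t) (normal_density 0 (s t))"
      if "t \<in> Inl ` (L \<times> K) \<union> Inr ` (N \<times> K)" for t
      using that mu xi by (auto simp: W_def s_def)
    show "s t > 0" for t
      using \<open>\<tau> > 0\<close> \<open>\<sigma> > 0\<close> by (simp add: s_def split: sum.split)
    show "(\<Sum>t\<in>T k. (a t)\<^sup>2 * (s t)\<^sup>2) = v" for k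
      using l(3) by (simp add: sum_T a_def s_def v(1) mult.commute flip: sum_distrib_left)
    show "T k \<subseteq> Inl ` (L \<times> K) \<union> Inr ` (N \<times> K)" if "k \<in> K" for k
      using that l C(1) by (auto simp: T_def)
  qed (use C(2) v(2) in \<open>auto simp: T_def disjoint_family_on_def\<close>)
  moreover have "(\<Sum>t\<in>T k. a t * W t \<omega>) = \<alpha> * (mu l k \<omega> - mu l' k \<omega>) + (\<Sum>m\<in>C. w m * xi m k \<omega>)"
    for k \<omega>
    using l(3) by (simp add: sum_T a_def W_def algebra_simps)
  ultimately show ?thesis
    by simp
qed

end

section \<open>Residual of a point from its cluster mean\<close>

definition centering_weight :: "'a set \<Rightarrow> 'a \<Rightarrow> 'a \<Rightarrow> real" where
  "centering_weight C i m = of_bool (m = i) - 1 / real (card C)"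

lemma sum_centering_weight_mult:
  assumes "finite C" "i \<in> C"
  shows "(\<Sum>m\<in>C. centering_weight C i m * e m) = e i - (\<Sum>m\<in>C. e m) / real (card C)"
  using assms
  by (simp add: centering_weight_def left_diff_distrib sum_subtractf sum_divide_distrib of_bool_def
      if_distrib[of "\<lambda>x. x * _"] sum.delta')

lemma sum_centering_weight_sq:
  assumes "finite C" "i \<in> C"
  shows "(\<Sum>m\<in>C. (centering_weight C i m)\<^sup>2) = (real (card C) - 1) / real (card C)"
proof -
  define c where "c = real (card C)"
  have c: "c > 0"
    using assms by (auto simp: c_def card_gt_0_iff)
  have "(centering_weight C i m)\<^sup>2 = of_bool (m = i) * (1 - 2 / c) + 1 / c\<^sup>2" for m
    using c by (cases "m = i")
      (simp_all add: centering_weight_def c_def[symmetric] power2_eq_square field_simps)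
  then have "(\<Sum>m\<in>C. (centering_weight C i m)\<^sup>2) = (1 - 2 / c) + c / c\<^sup>2"
    using assms by (simp add: sum.distrib c_def flip: sum_distrib_right)
  also have "\<dots> = (c - 1) / c"
    using c by (simp add: field_simps power2_eq_square)
  finally show ?thesis
    by (simp add: c_def)
qed

lemma cluster_residual_decomposition:
  fixes mu :: "'l \<Rightarrow> real" and e :: "'a \<Rightarrow> real"
  assumes C: "finite C" "i \<in> C" and labels: "\<And>m. m \<in> C \<Longrightarrow> z m \<in> {z i, l'}"
  shows "mu (z i) + e i - (\<Sum>m\<in>C. mu (z m) + e m) / real (card C)
    = (1 - real (card (C \<inter> {m. z m = z i})) / real (card C)) * (mu (z i) - mu l')
      + (\<Sum>m\<in>C. centering_weight C i m * e m)"
proof -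
  define S where "S = {m. z m = z i}"
  have card_S: "card (C \<inter> S) \<le> card C" "card (C - S) = card C - card (C \<inter> S)"
    using C by (auto simp: card_mono card_Diff_subset_Int)
  have "(\<Sum>m\<in>C. mu (z m)) = (\<Sum>m\<in>C \<inter> S. mu (z m)) + (\<Sum>m\<in>C - S. mu (z m))"
    using C(1) by (rule sum.Int_Diff)
  also have "\<dots> = (\<Sum>m\<in>C \<inter> S. mu (z i)) + (\<Sum>m\<in>C - S. mu l')"
    using labels by (intro arg_cong2[where f = "(+)"] sum.cong) (auto simp: S_def)
  also have "\<dots> = real (card (C \<inter> S)) * mu (z i) + (real (card C) - real (card (C \<inter> S))) * mu l'"
    using card_S by (simp add: of_nat_diff)
  finally have centers: "(\<Sum>m\<in>C. mu (z m))
      = real (card (C \<inter> S)) * mu (z i) + (real (card C) - real (card (C \<inter> S))) * mu l'" .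
  have "real (card C) > 0"
    using C by (auto simp: card_gt_0_iff)
  then show ?thesis
    using C unfolding sum_centering_weight_mult[OF C] sum.distrib centers S_def[symmetric]
    by (simp add: divide_simps) (auto simp: algebra_simps)
qed

lemma hartigan_dist2_two_label_cluster:
  fixes mu e :: "nat \<Rightarrow> nat \<Rightarrow> real"
  assumes C: "finite C" "i \<in> C" and labels: "\<And>m. m \<in> C \<Longrightarrow> z m \<in> {z i, l'}"
  shows "hartigan_dist2 d (\<lambda>m k. mu (z m) k + e m k) i C
    = real (card C) / (real (card C) - 1) * (\<Sum>k<d.
        ((1 - real (card (C \<inter> {m. z m = z i})) / real (card C)) * (mu (z i) k - mu l' k)
          + (\<Sum>m\<in>C. centering_weight C i m * e m k))\<^sup>2)"
proof -
  have "mu (z i) k + e i k - cluster_mean (\<lambda>m k. mu (z m) k + e m k) C k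
      = (1 - real (card (C \<inter> {m. z m = z i})) / real (card C)) * (mu (z i) k - mu l' k)
        + (\<Sum>m\<in>C. centering_weight C i m * e m k)" for k
    using cluster_residual_decomposition[where mu = "\<lambda>l. mu l k" and e = "\<lambda>m. e m k"
        and z = z and l' = l', OF C labels]
    by (simp add: cluster_mean_def)
  then show ?thesis
    by (simp add: hartigan_dist2_def)
qed

theorem corollaryD2:
  fixes M :: "'a measure"
    and n d :: nat and \<tau> \<sigma> :: real
    and mu :: "nat \<Rightarrow> nat \<Rightarrow> 'a \<Rightarrow> real"
    and xi :: "nat \<Rightarrow> nat \<Rightarrow> 'a \<Rightarrow> real"
    and z :: "nat \<Rightarrow> nat" and C :: "nat \<Rightarrow> nat set"
    and i j ll :: nat
  assumes "prob_space M"
    and "n \<ge> 2" and "d \<ge> 1" and "\<tau> > 0" and "\<sigma> > 0"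
    and indep: "prob_space.indep_vars M (\<lambda>_. borel)
        (\<lambda>t. case t of Inl (l, k) \<Rightarrow> mu l k | Inr (m, k) \<Rightarrow> xi m k)
        (Inl ` ({1, 2} \<times> {..<d}) \<union> Inr ` ({1..n} \<times> {..<d}))"
    and mu_distr: "\<And>l k. l \<in> {1, 2} \<Longrightarrow> k < d \<Longrightarrow>
        distributed M lborel (mu l k) (normal_density 0 \<tau>)"
    and xi_distr: "\<And>m k. m \<in> {1..n} \<Longrightarrow> k < d \<Longrightarrow>
        distributed M lborel (xi m k) (normal_density 0 \<sigma>)"
    and z_range: "\<And>m. m \<in> {1..n} \<Longrightarrow> z m \<in> {1, 2}"
    and classes_nonempty: "\<And>l. l \<in> {1, 2} \<Longrightarrow> {m \<in> {1..n}. z m = l} \<noteq> {}"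
    and partition: "C 1 \<union> C 2 = {1..n}" "C 1 \<inter> C 2 = {}" "C 1 \<noteq> {}" "C 2 \<noteq> {}"
    and "i \<in> {1..n}" and "z i = ll"
    and "j \<in> {1, 2}" and "i \<in> C j" and "card (C j) \<ge> 2"
  shows "let x = (\<lambda>\<omega> m k. mu (z m) k \<omega> + xi m k \<omega>);
             c = real (card (C j));
             R = real (card (C j \<inter> {m \<in> {1..n}. z m = ll})) / c;
             \<eta> = 2 * \<tau>\<^sup>2 * (c / (c - 1)) * (1 - R)\<^sup>2 + \<sigma>\<^sup>2
         in distributed M lborel (\<lambda>\<omega>. hartigan_dist2 d (x \<omega>) i (C j) / \<eta>) (chi2_density d)"
proof -
  interpret prob_space M by fact
  define c where "c = real (card (C j))"
  define R where "R = real (card (C j \<inter> {m \<in> {1..n}. z m = ll})) / c"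
  define l' :: nat where "l' = 3 - ll"
  define v where "v = 2 * (1 - R)\<^sup>2 * \<tau>\<^sup>2 + \<sigma>\<^sup>2 * (\<Sum>m\<in>C j. (centering_weight (C j) i m)\<^sup>2)"
  have Cj: "C j \<subseteq> {1..n}" "finite (C j)" "c \<ge> 2"
    using partition(1) \<open>j \<in> {1, 2}\<close> \<open>card (C j) \<ge> 2\<close> by (auto simp: c_def intro: finite_subset)
  have "ll \<in> {1, 2}"
    using z_range \<open>i \<in> {1..n}\<close> \<open>z i = ll\<close> by blast
  then have labels: "l' \<in> {1, 2}" "l' \<noteq> ll" "{ll, l'} = {1, 2}"
    by (auto simp: l'_def)
  have labels_Cj: "z m \<in> {z i, l'}" if "m \<in> C j" for m
    using z_range[of m] that Cj(1) labels(3) \<open>z i = ll\<close> by auto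
  have "C j \<inter> {m \<in> {1..n}. z m = ll} = C j \<inter> {m. z m = z i}"
    using Cj(1) \<open>z i = ll\<close> by auto
  then have R: "R = real (card (C j \<inter> {m. z m = z i})) / c"
    by (simp add: R_def)
  have v: "v = 2 * (1 - R)\<^sup>2 * \<tau>\<^sup>2 + \<sigma>\<^sup>2 * ((c - 1) / c)" "v > 0"
    using sum_centering_weight_sq[OF Cj(2) \<open>i \<in> C j\<close>] Cj(3) \<open>\<sigma> > 0\<close>
    by (auto simp: v_def c_def intro!: add_nonneg_pos)
  have "distributed M lborel (\<lambda>\<omega>. \<Sum>k\<in>{..<d}. ((1 - R) * (mu ll k \<omega> - mu l' k \<omega>)
      + (\<Sum>m\<in>C j. centering_weight (C j) i m * xi m k \<omega>))\<^sup>2 / v) (chi2_density (card {..<d}))"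
    using \<open>d \<ge> 1\<close> \<open>\<tau> > 0\<close> \<open>\<sigma> > 0\<close> \<open>ll \<in> {1, 2}\<close> labels(1,2) Cj(1,2) v(2)
    by (intro chi2_sum_squares_center_noise[OF indep])
      (auto simp: mu_distr xi_distr v_def lessThan_empty_iff)
  moreover have "hartigan_dist2 d (\<lambda>m k. mu (z m) k \<omega> + xi m k \<omega>) i (C j)
      = c / (c - 1) * (\<Sum>k<d. ((1 - R) * (mu ll k \<omega> - mu l' k \<omega>)
        + (\<Sum>m\<in>C j. centering_weight (C j) i m * xi m k \<omega>))\<^sup>2)" for \<omega>
    using hartigan_dist2_two_label_cluster[where mu = "\<lambda>l k. mu l k \<omega>" and e = "\<lambda>m k. xi m k \<omega>"
        and z = z and l' = l', OF Cj(2) \<open>i \<in> C j\<close> labels_Cj] \<open>z i = ll\<close>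
    by (simp add: R c_def)
  moreover have "2 * \<tau>\<^sup>2 * (c / (c - 1)) * (1 - R)\<^sup>2 + \<sigma>\<^sup>2 = c / (c - 1) * v"
    using Cj(3) by (simp add: v(1) field_simps)
  ultimately show ?thesis
    using Cj(3) unfolding Let_def c_def[symmetric] R_def[symmetric] by (simp add: sum_divide_distrib)
qed

end
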